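(* Let $f:\mathbb{C}^2\to\mathbb{C}$ be a convenient mixed polynomial that is Newton non-degenerate. Then $f$ has an inner Newton non-degenerate boundary.
   Context: A mixed polynomial is $f=\sum c_{\nu,\mu}z^\nu\bar z^\mu$ with $z=(u,v)\in\mathbb{C}^2$, $z^\nu=u^{\nu_1}v^{\nu_2}$, $\bar z^\mu=\bar u^{\mu_1}\bar v^{\mu_2}$, regarded as a real map $\mathbb{R}^4\to\mathbb{R}^2$. $V_f=f^{-1}(0)$; $\Sigma_f$ (critical points) is the set where the real Jacobian has rank $<2$, equivalently the common zeros of $f_u\overline{f_{\bar v}}-\overline{f_{\bar u}}f_v$, $|f_u|^2-|f_{\bar u}|^2$, $|f_v|^2-|f_{\bar v}|^2$ (Wirtinger derivatives). $(\mathbb{C}^* )^2=(\mathbb{C}\setminus\{0\})^2$. Newton data: $\mathrm{supp}(f)=\{\nu+\mu:c_{\nu,\mu}\ne0\}$; $\Gamma_+(f)$ = convex hull of $\bigcup_{w\in\mathrm{supp}(f)}(w+\mathbb{R}^2_{\ge0})$, assumed to have at least one compact 1-face; $\Gamma(f)$ = lattice points on compact faces. $f$ is convenient if $\Gamma(f)$ meets both coordinate axes. For a compact face $\Delta$ (vertex or edge), $f_\Delta$ is the sum of terms with $\nu+\mu\in\Delta$. The compact 1-faces are $\Delta(P_1),\dots,\Delta(P_N)$, $P_i=(p_{i,1},p_{i,2})$ the primitive positive weight vector orthogonal to the edge, ordered so $p_{i,1}/p_{i,2}$ strictly decreases (so $\Delta(P_1)$ is the steepest edge); $f_{P_i}:=f_{\Delta(P_i)}$.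 A vertex is extreme if it lies on exactly one compact 1-face, non-extreme if on two. $f$ is Newton non-degenerate (Oka) if for every compact face $\Delta$ (vertices and edges), $V_{f_\Delta}\cap\Sigma_{f_\Delta}\cap(\mathbb{C}^* )^2=\emptyset$. $f$ has an inner Newton non-degenerate boundary if (i) $f_{P_1}$ has no critical points in $V_{f_{P_1}}\cap\{v\neq0\}$ and $f_{P_N}$ none in $V_{f_{P_N}}\cap\{u\ne0\}$; (ii) for each compact 1-face and non-extreme vertex $\Delta$, $f_\Delta$ has no critical points in $V_{f_\Delta}\cap(\mathbb{C}^* )^2$. *)

theory Defs
  imports "HOL-Analysis.Analysis"
begin

text \<open>A mixed polynomial in z = (u,v): coefficient function
  c ((nu1,nu2),(mu1,mu2)) for the monomial u^nu1 v^nu2 conj(u)^mu1 conj(v)^mu2,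
  with finite support.\<close>

type_synonym mixed_poly = "(nat \<times> nat) \<times> (nat \<times> nat) \<Rightarrow> complex"

definition mixed_poly :: "mixed_poly \<Rightarrow> bool" where
  "mixed_poly c \<longleftrightarrow> finite {k. c k \<noteq> 0}"

definition mp_eval :: "mixed_poly \<Rightarrow> complex \<times> complex \<Rightarrow> complex" where
  "mp_eval c z = (\<Sum>k\<in>{k. c k \<noteq> 0}.
      c k * fst z ^ fst (fst k) * snd z ^ snd (fst k)
          * cnj (fst z) ^ fst (snd k) * cnj (snd z) ^ snd (snd k))"

definition mp_supp :: "mixed_poly \<Rightarrow> (nat \<times> nat) set" where
  "mp_supp c = {(fst (fst k) + fst (snd k), snd (fst k) + snd (snd k)) | k. c k \<noteq> 0}"

definition Gamma_plus :: "mixed_poly \<Rightarrow> (real \<times> real) set" where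
  "Gamma_plus c = convex hull (\<Union>w\<in>mp_supp c.
      {x. real (fst w) \<le> fst x \<and> real (snd w) \<le> snd x})"

definition wt :: "real \<times> real \<Rightarrow> real \<times> real \<Rightarrow> real" where
  "wt P x = fst P * fst x + snd P * snd x"

definition pos_weight :: "real \<times> real \<Rightarrow> bool" where
  "pos_weight P \<longleftrightarrow> 0 < fst P \<and> 0 < snd P"

text \<open>The compact face Delta(P) of Gamma_+(f) where the positive weight P
  attains its minimum. The compact faces of Gamma_+ are exactly these sets.\<close>
definition face :: "mixed_poly \<Rightarrow> real \<times> real \<Rightarrow> (real \<times> real) set" where
  "face c P = {x \<in> Gamma_plus c. \<forall>y\<in>Gamma_plus c. wt P x \<le> wt P y}"

definition compact_face :: "mixed_poly \<Rightarrow> (real \<times> real) set \<Rightarrow> bool" where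
  "compact_face c D \<longleftrightarrow> (\<exists>P. pos_weight P \<and> D = face c P \<and> D \<noteq> {})"

definition edge_weight :: "mixed_poly \<Rightarrow> real \<times> real \<Rightarrow> bool" where
  "edge_weight c P \<longleftrightarrow> pos_weight P \<and> (\<exists>x y. x \<in> face c P \<and> y \<in> face c P \<and> x \<noteq> y)"

definition compact_edge :: "mixed_poly \<Rightarrow> (real \<times> real) set \<Rightarrow> bool" where
  "compact_edge c D \<longleftrightarrow> (\<exists>P. edge_weight c P \<and> D = face c P)"

definition vertex :: "mixed_poly \<Rightarrow> real \<times> real \<Rightarrow> bool" where
  "vertex c x \<longleftrightarrow> compact_face c {x}"

definition nonextreme_vertex :: "mixed_poly \<Rightarrow> real \<times> real \<Rightarrow> bool" where
  "nonextreme_vertex c x \<longleftrightarrow> vertex c x \<and>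
     (\<exists>D1 D2. compact_edge c D1 \<and> compact_edge c D2 \<and> D1 \<noteq> D2 \<and> x \<in> D1 \<and> x \<in> D2)"

definition Gamma :: "mixed_poly \<Rightarrow> (nat \<times> nat) set" where
  "Gamma c = {w. \<exists>D. compact_face c D \<and> (real (fst w), real (snd w)) \<in> D}"

definition convenient :: "mixed_poly \<Rightarrow> bool" where
  "convenient c \<longleftrightarrow> (\<exists>a. (a, 0) \<in> Gamma c) \<and> (\<exists>b. (0, b) \<in> Gamma c)"

definition face_part :: "mixed_poly \<Rightarrow> (real \<times> real) set \<Rightarrow> mixed_poly" where
  "face_part c D = (\<lambda>k. if (real (fst (fst k) + fst (snd k)), real (snd (fst k) + snd (snd k))) \<in> D
                         then c k else 0)"

text \<open>Critical point of g : C^2 = R^4 \<rightarrow> C = R^2: the real Jacobian has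
  rank < 2, i.e. the real derivative is not surjective.\<close>
definition critical_point :: "(complex \<times> complex \<Rightarrow> complex) \<Rightarrow> complex \<times> complex \<Rightarrow> bool" where
  "critical_point g z \<longleftrightarrow> (\<exists>D. (g has_derivative D) (at z) \<and> \<not> surj D)"

definition no_crit_on :: "mixed_poly \<Rightarrow> (complex \<times> complex) set \<Rightarrow> bool" where
  "no_crit_on c A \<longleftrightarrow>
     (\<forall>z\<in>A. mp_eval c z = 0 \<longrightarrow> \<not> critical_point (mp_eval c) z)"

definition torus :: "(complex \<times> complex) set" where
  "torus = {z. fst z \<noteq> 0 \<and> snd z \<noteq> 0}"

definition newton_nondegenerate :: "mixed_poly \<Rightarrow> bool" where
  "newton_nondegenerate c \<longleftrightarrow>
     (\<forall>D. compact_face c D \<longrightarrow> no_crit_on (face_part c D) torus)"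

text \<open>P_1: edge weight with largest ratio p1/p2 (steepest edge);
  P_N: edge weight with smallest ratio.\<close>
definition first_edge_weight :: "mixed_poly \<Rightarrow> real \<times> real \<Rightarrow> bool" where
  "first_edge_weight c P \<longleftrightarrow> edge_weight c P \<and>
     (\<forall>Q. edge_weight c Q \<longrightarrow> fst Q / snd Q \<le> fst P / snd P)"

definition last_edge_weight :: "mixed_poly \<Rightarrow> real \<times> real \<Rightarrow> bool" where
  "last_edge_weight c P \<longleftrightarrow> edge_weight c P \<and>
     (\<forall>Q. edge_weight c Q \<longrightarrow> fst P / snd P \<le> fst Q / snd Q)"

definition inner_nondegenerate_boundary :: "mixed_poly \<Rightarrow> bool" where
  "inner_nondegenerate_boundary c \<longleftrightarrow>
     (\<forall>P. first_edge_weight c P \<longrightarrow>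
          no_crit_on (face_part c (face c P)) {z. snd z \<noteq> 0}) \<and>
     (\<forall>P. last_edge_weight c P \<longrightarrow>
          no_crit_on (face_part c (face c P)) {z. fst z \<noteq> 0}) \<and>
     (\<forall>D. compact_edge c D \<longrightarrow> no_crit_on (face_part c D) torus) \<and>
     (\<forall>x. nonextreme_vertex c x \<longrightarrow> no_crit_on (face_part c {x}) torus)"

end

theory Submission
  imports Defs
begin

text \<open>Convenience provides a vertex (0, b) of the Newton boundary on the v-axis. It lies on the
  steepest edge: were some support point below the line of weight P1 through (0, b), rotating this
  line about (0, b) until it meets the support would produce a steeper edge. Hence the part of
  f_P1 free of u is the vertex part f_(0,b), i.e. f_P1 (0, v) = f_(0,b) (u, v) for every u, and a
  critical zero of f_P1 at (0, v) with v \<noteq> 0 yields one of f_(0,b) at (1, v) in the torus,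
  contradicting non-degeneracy of the vertex. Off the axis non-degeneracy of the edge applies
  directly. The last edge is handled by exchanging u and v, and the remaining conditions are
  instances of Newton non-degeneracy.\<close>

lemma critical_point_compose:
  assumes "(L has_derivative L') (at z)" "critical_point h (L z)"
  shows "critical_point (h \<circ> L) z"
proof -
  obtain D where D: "(h has_derivative D) (at (L z))" "\<not> surj D"
    using assms(2) by (auto simp: critical_point_def)
  have "(h \<circ> L has_derivative D \<circ> L') (at z)"
    using diff_chain_at[OF assms(1) D(1)] .
  moreover have "\<not> surj (D \<circ> L')"
    using D(2) unfolding surj_def comp_def by blast
  ultimately show ?thesis unfolding critical_point_def by blast
qed

definition real_point :: "nat \<times> nat \<Rightarrow> real \<times> real" where
  "real_point w = (real (fst w), real (snd w))"

lemma finite_mp_supp: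
  assumes "mixed_poly c" shows "finite (mp_supp c)"
proof -
  have "mp_supp c = (\<lambda>k. (fst (fst k) + fst (snd k), snd (fst k) + snd (snd k))) ` {k. c k \<noteq> 0}"
    unfolding mp_supp_def by (rule setcompr_eq_image)
  thus ?thesis using assms by (simp add: mixed_poly_def)
qed

lemma real_point_in_Gamma_plus: "w \<in> mp_supp c \<Longrightarrow> real_point w \<in> Gamma_plus c"
  unfolding Gamma_plus_def real_point_def by (rule hull_inc) auto

lemma Gamma_plus_wt_lower_bound:
  assumes "0 \<le> fst P" "0 \<le> snd P" "\<And>w. w \<in> mp_supp c \<Longrightarrow> m \<le> wt P (real_point w)"
    and "x \<in> Gamma_plus c"
  shows "m \<le> wt P x"
proof -
  have "Gamma_plus c \<subseteq> {x. m \<le> wt P x}"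
    unfolding Gamma_plus_def
  proof (rule hull_minimal)
    have "{x. m \<le> wt P x} = {x. m \<le> inner P x}"
      by (auto simp: wt_def inner_prod_def)
    thus "convex {x. m \<le> wt P x}" by (simp add: convex_halfspace_ge)
    show "(\<Union>w\<in>mp_supp c. {x. real (fst w) \<le> fst x \<and> real (snd w) \<le> snd x}) \<subseteq> {x. m \<le> wt P x}"
    proof safe
      fix w x assume w: "w \<in> mp_supp c" and "real (fst w) \<le> fst x" "real (snd w) \<le> snd x"
      hence "wt P (real_point w) \<le> wt P x"
        using assms(1,2) by (simp add: wt_def real_point_def add_mono mult_left_mono)
      with assms(3)[OF w] show "m \<le> wt P x" by linarith
    qed
  qed
  thus ?thesis using assms(4) by blast
qed

lemma face_memI:
  assumes "x \<in> Gamma_plus c" "0 \<le> fst P" "0 \<le> snd P"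
    and "\<And>w. w \<in> mp_supp c \<Longrightarrow> wt P x \<le> wt P (real_point w)"
  shows "x \<in> face c P"
  using Gamma_plus_wt_lower_bound[OF assms(2,3,4)] assms(1) by (auto simp: face_def)

lemma Gamma_y_axis_least:
  assumes "(0, b) \<in> Gamma c" "w \<in> mp_supp c" "fst w = 0"
  shows "b \<le> snd w"
proof -
  obtain Q where Q: "pos_weight Q" "(0, real b) \<in> face c Q"
    using assms(1) by (auto simp: Gamma_def compact_face_def)
  hence "wt Q (0, real b) \<le> wt Q (real_point w)"
    using real_point_in_Gamma_plus[OF assms(2)] by (auto simp: face_def)
  hence "snd Q * real b \<le> snd Q * real (snd w)" using assms(3) by (simp add: wt_def real_point_def)
  thus ?thesis using Q(1) by (simp add: pos_weight_def)
qed

lemma Gamma_y_axis_in_Gamma_plus: "(0, b) \<in> Gamma c \<Longrightarrow> (0, real b) \<in> Gamma_plus c"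
  by (auto simp: Gamma_def compact_face_def face_def)

lemma compact_face_y_axis_vertex:
  assumes "(0, b) \<in> Gamma c"
  shows "compact_face c {(0, real b)}"
proof -
  define P :: "real \<times> real" where "P = (real b + 1, 1)"
  \<comment> \<open>P supports the polygon at (0, b); doubling its first entry makes (0, b) the only minimiser.\<close>
  have P_bound: "real b \<le> wt P (real_point w)" if "w \<in> mp_supp c" for w
  proof (cases "fst w = 0")
    case True
    thus ?thesis using Gamma_y_axis_least[OF assms that] by (simp add: P_def wt_def real_point_def)
  next
    case False
    hence "real b + 1 \<le> (real b + 1) * real (fst w)" by simp
    moreover have "0 \<le> real (snd w)" by simp
    ultimately show ?thesis unfolding P_def wt_def real_point_def fst_conv snd_conv by linarith
  qed
  have bG: "(0, real b) \<in> Gamma_plus c" using Gamma_y_axis_in_Gamma_plus[OF assms] .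
  define Q :: "real \<times> real" where "Q = (2 * (real b + 1), 1)"
  have "face c Q = {(0, real b)}"
  proof
    have "wt Q (0, real b) \<le> wt Q (real_point w)" if "w \<in> mp_supp c" for w
    proof -
      have "wt P (real_point w) \<le> wt Q (real_point w)"
        by (simp add: P_def Q_def wt_def real_point_def mult_right_mono)
      thus ?thesis using P_bound[OF that] by (simp add: Q_def wt_def)
    qed
    thus "{(0, real b)} \<subseteq> face c Q" using face_memI[OF bG] by (simp add: Q_def)
  next
    show "face c Q \<subseteq> {(0, real b)}"
    proof
      fix x assume x: "x \<in> face c Q"
      hence "x \<in> Gamma_plus c" and "wt Q x \<le> wt Q (0, real b)"
        using bG by (auto simp: face_def)
      moreover have "real b \<le> wt P x"
        using Gamma_plus_wt_lower_bound[OF _ _ P_bound \<open>x \<in> Gamma_plus c\<close>] by (simp add: P_def)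
      moreover have "0 \<le> wt (1, 0) x"
        by (rule Gamma_plus_wt_lower_bound[OF _ _ _ \<open>x \<in> Gamma_plus c\<close>]) (auto simp: wt_def real_point_def)
      ultimately have "(real b + 1) * fst x \<le> 0" "0 \<le> fst x" "real b \<le> (real b + 1) * fst x + snd x"
        "2 * (real b + 1) * fst x + snd x \<le> real b"
        by (simp_all add: P_def Q_def wt_def algebra_simps)
      hence "fst x = 0" "snd x = real b"
        by (simp_all add: mult_le_0_iff add_pos_nonneg)
      thus "x \<in> {(0, real b)}" by (cases x) simp
    qed
  qed
  moreover have "pos_weight Q" by (simp add: pos_weight_def Q_def)
  ultimately show ?thesis unfolding compact_face_def by blast
qed

lemma steeper_edge_through_y_axis_vertex:
  assumes "mixed_poly c" "(0, b) \<in> Gamma c" "pos_weight P"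
    and "w\<^sub>0 \<in> mp_supp c" "wt P (real_point w\<^sub>0) < wt P (0, real b)"
  obtains M where "edge_weight c (M, 1)" "fst P / snd P < M"
proof -
  have p: "0 < fst P" "0 < snd P" using assms(3) by (auto simp: pos_weight_def)
  have w\<^sub>0: "fst P * real (fst w\<^sub>0) < snd P * (real b - real (snd w\<^sub>0))"
    using assms(5) by (simp add: wt_def real_point_def algebra_simps)
  have "0 < fst w\<^sub>0"
  proof (rule ccontr)
    assume "\<not> 0 < fst w\<^sub>0"
    hence "fst w\<^sub>0 = 0" by simp
    moreover have "b \<le> snd w\<^sub>0" using Gamma_y_axis_least[OF assms(2,4)] calculation .
    ultimately have "snd P * (real b - real (snd w\<^sub>0)) \<le> 0"
      using p by (simp add: mult_nonneg_nonpos)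
    with w\<^sub>0 \<open>fst w\<^sub>0 = 0\<close> show False by simp
  qed
  \<comment> \<open>The line of weight (M, 1) through (0, b) is the line of P rotated about (0, b) until it
    touches a support point w1 off the axis.\<close>
  define T where "T = {w \<in> mp_supp c. 0 < fst w}"
  define slope where "slope w = (real b - real (snd w)) / real (fst w)" for w
  define M where "M = Max (slope ` T)"
  have "finite T" using finite_mp_supp[OF assms(1)] by (simp add: T_def)
  have "w\<^sub>0 \<in> T" using assms(4) \<open>0 < fst w\<^sub>0\<close> by (simp add: T_def)
  have slope_le: "slope w \<le> M" if "w \<in> T" for w
    unfolding M_def using \<open>finite T\<close> that by (intro Max_ge) auto
  have "M \<in> slope ` T"
    unfolding M_def using \<open>finite T\<close> \<open>w\<^sub>0 \<in> T\<close> by (intro Max_in) auto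
  then obtain w\<^sub>1 where w\<^sub>1: "w\<^sub>1 \<in> T" "slope w\<^sub>1 = M" by blast
  have "fst P / snd P < slope w\<^sub>0"
    unfolding slope_def using w\<^sub>0 p \<open>0 < fst w\<^sub>0\<close>
    by (simp add: pos_divide_less_eq pos_less_divide_eq mult.commute)
  hence steeper: "fst P / snd P < M" using slope_le[OF \<open>w\<^sub>0 \<in> T\<close>] by linarith
  hence "0 < M" using p by (meson divide_pos_pos less_trans)
  have supporting: "real b \<le> wt (M, 1) (real_point w)" if "w \<in> mp_supp c" for w
  proof (cases "fst w = 0")
    case True
    thus ?thesis using Gamma_y_axis_least[OF assms(2) that] by (simp add: wt_def real_point_def)
  next
    case False
    hence "slope w \<le> M" using slope_le that by (simp add: T_def)
    thus ?thesis using False by (simp add: slope_def wt_def real_point_def pos_divide_le_eq)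
  qed
  have "(0, real b) \<in> face c (M, 1)"
    using face_memI[OF Gamma_y_axis_in_Gamma_plus[OF assms(2)], of "(M, 1)"] supporting \<open>0 < M\<close>
    by (simp add: wt_def)
  moreover have "real_point w\<^sub>1 \<in> face c (M, 1)"
  proof (rule face_memI)
    show "real_point w\<^sub>1 \<in> Gamma_plus c"
      using w\<^sub>1(1) by (simp add: T_def real_point_in_Gamma_plus)
    have "wt (M, 1) (real_point w\<^sub>1) = real b"
      using w\<^sub>1 by (simp add: T_def slope_def wt_def real_point_def divide_eq_eq)
    thus "wt (M, 1) (real_point w\<^sub>1) \<le> wt (M, 1) (real_point w)" if "w \<in> mp_supp c" for w
      using supporting[OF that] by simp
  qed (use \<open>0 < M\<close> in auto)
  moreover have "(0, real b) \<noteq> real_point w\<^sub>1" using w\<^sub>1(1) by (simp add: T_def real_point_def)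
  ultimately have "edge_weight c (M, 1)"
    unfolding edge_weight_def pos_weight_def fst_conv snd_conv using \<open>0 < M\<close> zero_less_one by blast
  with steeper show ?thesis using that by blast
qed

lemma y_axis_vertex_in_first_edge:
  assumes "mixed_poly c" "(0, b) \<in> Gamma c" "first_edge_weight c P"
  shows "(0, real b) \<in> face c P"
proof (rule face_memI)
  have P: "pos_weight P" "\<And>Q. edge_weight c Q \<Longrightarrow> fst Q / snd Q \<le> fst P / snd P"
    using assms(3) by (auto simp: first_edge_weight_def edge_weight_def)
  show "0 \<le> fst P" "0 \<le> snd P" using P(1) by (auto simp: pos_weight_def)
  show "(0, real b) \<in> Gamma_plus c" using Gamma_y_axis_in_Gamma_plus[OF assms(2)] .
  show "wt P (0, real b) \<le> wt P (real_point w)" if w: "w \<in> mp_supp c" for w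
  proof (rule ccontr)
    assume "\<not> ?thesis"
    then obtain M where "edge_weight c (M, 1)" "fst P / snd P < M"
      using steeper_edge_through_y_axis_vertex[OF assms(1,2) P(1) w] by force
    with P(2)[of "(M, 1)"] show False by simp
  qed
qed

lemma face_inter_y_axis:
  assumes "pos_weight P" "(0, y) \<in> face c P"
  shows "face c P \<inter> {x. fst x = 0} = {(0, y)}"
proof
  show "face c P \<inter> {x. fst x = 0} \<subseteq> {(0, y)}"
  proof
    fix x assume x: "x \<in> face c P \<inter> {x. fst x = 0}"
    with assms(2) have "wt P x = wt P (0, y)"
      unfolding face_def by (auto intro: order.antisym)
    thus "x \<in> {(0, y)}" using x assms(1) by (cases x) (simp add: wt_def pos_weight_def)
  qed
qed (use assms(2) in auto)

lemma mp_eval_face_part_y_axis: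
  assumes "mixed_poly c"
  shows "mp_eval (face_part c F) (0, v) = mp_eval (face_part c (F \<inter> {x. fst x = 0})) (u, v)"
  unfolding mp_eval_def
proof (rule sum.mono_neutral_cong_right)
  show "finite {k. face_part c F k \<noteq> 0}"
    using assms unfolding mixed_poly_def by (rule rev_finite_subset) (auto simp: face_part_def)
qed (auto simp: face_part_def add_nonneg_eq_0_iff split: if_splits)

lemma edge_weight_compact_face: "edge_weight c P \<Longrightarrow> compact_face c (face c P)"
  unfolding compact_face_def edge_weight_def by blast

lemma first_edge_no_crit:
  assumes "mixed_poly c" "(0, b) \<in> Gamma c" "newton_nondegenerate c" "first_edge_weight c P"
  shows "no_crit_on (face_part c (face c P)) {z. snd z \<noteq> 0}"
  unfolding no_crit_on_def
proof (intro ballI impI notI)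
  let ?f = "mp_eval (face_part c (face c P))"
  fix z assume z: "z \<in> {z. snd z \<noteq> 0}" "?f z = 0" "critical_point ?f z"
  have P: "edge_weight c P" using assms(4) by (simp add: first_edge_weight_def)
  hence no_crit_edge: "no_crit_on (face_part c (face c P)) torus"
    using assms(3) edge_weight_compact_face by (simp add: newton_nondegenerate_def)
  show False
  proof (cases "fst z = 0")
    case False
    with z have "z \<in> torus" by (simp add: torus_def)
    with z no_crit_edge show False by (simp add: no_crit_on_def)
  next
    case True
    let ?g = "mp_eval (face_part c {(0, real b)})"
    let ?y_proj = "\<lambda>z :: complex \<times> complex. (0 :: complex, snd z)"
    have "face c P \<inter> {x. fst x = 0} = {(0, real b)}"
      using P y_axis_vertex_in_first_edge[OF assms(1,2,4)]
      by (intro face_inter_y_axis) (auto simp: edge_weight_def)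
    hence g_eq: "?g = ?f \<circ> ?y_proj"
      using mp_eval_face_part_y_axis[OF assms(1), of "face c P"] by (auto intro!: ext)
    have "(?y_proj has_derivative ?y_proj) (at (1, snd z))"
      by (auto intro!: derivative_eq_intros)
    moreover have proj_z: "?y_proj (1, snd z) = z" using True by (cases z) simp
    ultimately have "critical_point ?g (1, snd z)"
      unfolding g_eq using critical_point_compose z(3) by metis
    moreover have "?g (1, snd z) = 0" using z(2) proj_z by (simp add: g_eq)
    moreover have "no_crit_on (face_part c {(0, real b)}) torus"
      using assms(3) compact_face_y_axis_vertex[OF assms(2)] by (simp add: newton_nondegenerate_def)
    moreover have "(1, snd z) \<in> torus" using z(1) by (simp add: torus_def)
    ultimately show False by (simp add: no_crit_on_def)
  qed
qed

definition mp_swap :: "mixed_poly \<Rightarrow> mixed_poly" where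
  "mp_swap c k = c (prod.swap (fst k), prod.swap (snd k))"

lemma mp_swap_mp_swap [simp]: "mp_swap (mp_swap c) = c"
  by (simp add: mp_swap_def fun_eq_iff)

lemma mixed_poly_mp_swap: "mixed_poly c \<Longrightarrow> mixed_poly (mp_swap c)"
proof -
  have "inj (\<lambda>k :: (nat \<times> nat) \<times> nat \<times> nat. (prod.swap (fst k), prod.swap (snd k)))"
    by (rule injI) (simp add: prod_eq_iff)
  thus "mixed_poly c \<Longrightarrow> mixed_poly (mp_swap c)"
    unfolding mixed_poly_def mp_swap_def by (auto dest: finite_vimageI simp: vimage_def)
qed

lemma mp_eval_mp_swap: "mp_eval (mp_swap c) z = mp_eval c (prod.swap z)"
  unfolding mp_eval_def
  by (rule sum.reindex_bij_witness[of _ "\<lambda>k. (prod.swap (fst k), prod.swap (snd k))"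
        "\<lambda>k. (prod.swap (fst k), prod.swap (snd k))"])
     (auto simp: mp_swap_def)

lemma mp_supp_mp_swap: "mp_supp (mp_swap c) = prod.swap ` mp_supp c"
proof
  show "mp_supp (mp_swap c) \<subseteq> prod.swap ` mp_supp c"
    unfolding mp_supp_def mp_swap_def by (auto simp: image_iff intro!: exI)
  show "prod.swap ` mp_supp c \<subseteq> mp_supp (mp_swap c)"
  proof
    fix x assume "x \<in> prod.swap ` mp_supp c"
    then obtain k where "c k \<noteq> 0"
      "x = (snd (fst k) + snd (snd k), fst (fst k) + fst (snd k))"
      by (auto simp: mp_supp_def)
    thus "x \<in> mp_supp (mp_swap c)"
      unfolding mp_supp_def mp_swap_def
      by (intro CollectI exI[of _ "(prod.swap (fst k), prod.swap (snd k))"]) simp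
  qed
qed

lemma Gamma_plus_mp_swap: "Gamma_plus (mp_swap c) = prod.swap ` Gamma_plus c"
proof -
  have "linear (prod.swap :: real \<times> real \<Rightarrow> real \<times> real)"
    by (auto simp: linear_iff)
  moreover have "prod.swap ` {x. real (fst w) \<le> fst x \<and> real (snd w) \<le> snd x}
      = {x. real (snd w) \<le> fst x \<and> real (fst w) \<le> snd x}" for w :: "nat \<times> nat"
    by (auto simp: image_iff)
  ultimately show ?thesis
    unfolding Gamma_plus_def mp_supp_mp_swap
    by (simp add: convex_hull_linear_image image_UN)
qed

lemma face_mp_swap: "face (mp_swap c) (prod.swap P) = prod.swap ` face c P"
  unfolding face_def Gamma_plus_mp_swap by (auto simp: image_iff wt_def add.commute)

lemma compact_face_mp_swap: "compact_face c D \<Longrightarrow> compact_face (mp_swap c) (prod.swap ` D)"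
  unfolding compact_face_def pos_weight_def
  by (metis face_mp_swap image_is_empty fst_swap snd_swap)

lemma edge_weight_mp_swap: "edge_weight c P \<Longrightarrow> edge_weight (mp_swap c) (prod.swap P)"
  unfolding edge_weight_def pos_weight_def face_mp_swap
  by (metis fst_swap snd_swap image_eqI swap_swap)

lemma face_part_mp_swap: "face_part (mp_swap c) (prod.swap ` D) = mp_swap (face_part c D)"
  by (auto simp: face_part_def mp_swap_def fun_eq_iff)

lemma no_crit_on_mp_swap:
  assumes "no_crit_on c A" shows "no_crit_on (mp_swap c) (prod.swap ` A)"
  unfolding no_crit_on_def
proof (intro ballI impI notI)
  fix z assume z: "z \<in> prod.swap ` A" "mp_eval (mp_swap c) z = 0"
    "critical_point (mp_eval (mp_swap c)) z"
  have "mp_eval c = mp_eval (mp_swap c) \<circ> prod.swap"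
    by (simp add: fun_eq_iff mp_eval_mp_swap)
  moreover have "(prod.swap has_derivative prod.swap) (at (prod.swap z))"
    unfolding prod.swap_def by (auto intro!: derivative_eq_intros)
  ultimately have "critical_point (mp_eval c) (prod.swap z)"
    using critical_point_compose z(3) by (metis swap_swap)
  moreover have "prod.swap z \<in> A" "mp_eval c (prod.swap z) = 0"
    using z(1,2) by (auto simp: mp_eval_mp_swap)
  ultimately show False using assms by (simp add: no_crit_on_def)
qed

lemma newton_nondegenerate_mp_swap:
  assumes "newton_nondegenerate c" shows "newton_nondegenerate (mp_swap c)"
  unfolding newton_nondegenerate_def
proof (intro allI impI)
  fix D assume "compact_face (mp_swap c) D"
  hence "compact_face c (prod.swap ` D)"
    using compact_face_mp_swap[of "mp_swap c" D] by simp
  hence "no_crit_on (face_part c (prod.swap ` D)) torus"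
    using assms by (simp add: newton_nondegenerate_def)
  hence "no_crit_on (mp_swap (face_part c (prod.swap ` D))) (prod.swap ` torus)"
    by (rule no_crit_on_mp_swap)
  moreover have "prod.swap ` torus = torus" by (auto simp: torus_def image_iff)
  ultimately show "no_crit_on (face_part (mp_swap c) D) torus"
    using face_part_mp_swap[of c "prod.swap ` D"] by (simp add: image_image)
qed

lemma Gamma_mp_swap: "(a, b) \<in> Gamma c \<Longrightarrow> (b, a) \<in> Gamma (mp_swap c)"
  unfolding Gamma_def using compact_face_mp_swap by fastforce

lemma first_edge_weight_mp_swap:
  assumes "last_edge_weight c P" shows "first_edge_weight (mp_swap c) (prod.swap P)"
  unfolding first_edge_weight_def
proof (intro conjI allI impI)
  show "edge_weight (mp_swap c) (prod.swap P)"
    using assms by (simp add: last_edge_weight_def edge_weight_mp_swap)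
  fix Q assume "edge_weight (mp_swap c) Q"
  hence "edge_weight c (prod.swap Q)" "pos_weight Q"
    using edge_weight_mp_swap[of "mp_swap c" Q] by (simp_all add: edge_weight_def)
  moreover have "pos_weight P" using assms by (simp add: last_edge_weight_def edge_weight_def)
  ultimately have "fst P / snd P \<le> fst (prod.swap Q) / snd (prod.swap Q)"
    "0 < fst Q" "0 < snd Q" "0 < fst P" "0 < snd P"
    using assms unfolding last_edge_weight_def pos_weight_def by blast+
  thus "fst Q / snd Q \<le> fst (prod.swap P) / snd (prod.swap P)"
    by (simp add: divide_le_eq le_divide_eq mult.commute)
qed

lemma last_edge_no_crit:
  assumes "mixed_poly c" "(a, 0) \<in> Gamma c" "newton_nondegenerate c" "last_edge_weight c P"
  shows "no_crit_on (face_part c (face c P)) {z. fst z \<noteq> 0}"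
proof -
  have "no_crit_on (face_part (mp_swap c) (face (mp_swap c) (prod.swap P))) {z. snd z \<noteq> 0}"
    using first_edge_no_crit[OF mixed_poly_mp_swap Gamma_mp_swap newton_nondegenerate_mp_swap
        first_edge_weight_mp_swap] assms .
  hence "no_crit_on (mp_swap (face_part c (face c P))) {z. snd z \<noteq> 0}"
    by (simp add: face_mp_swap face_part_mp_swap)
  hence "no_crit_on (face_part c (face c P)) (prod.swap ` {z. snd z \<noteq> 0})"
    using no_crit_on_mp_swap by fastforce
  moreover have "prod.swap ` {z. snd z \<noteq> 0} = {z :: complex \<times> complex. fst z \<noteq> 0}"
    by (auto simp: image_iff)
  ultimately show ?thesis by simp
qed

theorem mainTheorem4:
  fixes c :: mixed_poly
  assumes "mixed_poly c"
    and "\<exists>D. compact_edge c D"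
    and "convenient c"
    and "newton_nondegenerate c"
  shows "inner_nondegenerate_boundary c"
proof -
  obtain a b where a: "(a, 0) \<in> Gamma c" and b: "(0, b) \<in> Gamma c"
    using assms(3) by (auto simp: convenient_def)
  have face_no_crit: "no_crit_on (face_part c D) torus" if "compact_face c D" for D
    using assms(4) that by (simp add: newton_nondegenerate_def)
  show ?thesis
    unfolding inner_nondegenerate_boundary_def
  proof (intro conjI allI impI)
    fix P assume "first_edge_weight c P"
    thus "no_crit_on (face_part c (face c P)) {z. snd z \<noteq> 0}"
      by (rule first_edge_no_crit[OF assms(1) b assms(4)])
  next
    fix P assume "last_edge_weight c P"
    thus "no_crit_on (face_part c (face c P)) {z. fst z \<noteq> 0}"
      by (rule last_edge_no_crit[OF assms(1) a assms(4)])
  next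
    fix D assume "compact_edge c D"
    thus "no_crit_on (face_part c D) torus"
      by (auto simp: compact_edge_def intro: face_no_crit edge_weight_compact_face)
  next
    fix x assume "nonextreme_vertex c x"
    thus "no_crit_on (face_part c {x}) torus"
      by (simp add: nonextreme_vertex_def vertex_def face_no_crit)
  qed
qed

end
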